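(* For all positive integers $n,p$, $$\beta^*(n,p,\infty)=\Omega\left(n^{2/3}p^{2/3}+n+p\right).$$
   Context: A path system is a pair $S=(V,\Pi)$ where $V$ is a finite ground set of nodes and $\Pi$ is a multiset of finite sequences of nodes (paths), each containing each node at most once. Its size is $\|S\|=\sum_{\pi\in\Pi}|\pi|$ ($|\pi|$ = number of nodes). Write $x<_\pi y$ if $x,y\in\pi$ and $x$ strictly precedes $y$ in $\pi$. A $b$-bridge consists of $b$ distinct nodes $v_1,\dots,v_b$ and $b$ distinct paths $\pi_1,\dots,\pi_b$ with $v_i<_{\pi_i}v_{i+1}$ for $1\le i\le b-1$ and $v_1<_{\pi_b}v_b$; $\pi_b$ is the river and the others are arcs. An ordered path system is a path system with a total order on its paths; an ordered bridge is a bridge whose river comes after all of its arcs in this order. The ordered bridge girth is the least $b$ such that there is an ordered $b$-bridge ($\infty$ if none). $\beta^*(n,p,k)$ is the maximum possible size of an ordered path system with $n$ nodes, $p$ paths and ordered bridge girth $>k$. *)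

theory Defs
  imports Complex_Main "HOL-Library.Extended_Nat"
begin

text \<open>Nodes are natural numbers; an ordered path system is a ground set V together
with a list of paths (the list order is the total order on the paths; repetitions
model the multiset).\<close>

definition prec :: "nat list \<Rightarrow> nat \<Rightarrow> nat \<Rightarrow> bool" where
  "prec \<pi> x y \<longleftrightarrow> (\<exists>i j. i < j \<and> j < length \<pi> \<and> \<pi> ! i = x \<and> \<pi> ! j = y)"

definition path_system :: "nat set \<Rightarrow> nat list list \<Rightarrow> bool" where
  "path_system V Ps \<longleftrightarrow> finite V \<and> (\<forall>\<pi>\<in>set Ps. distinct \<pi> \<and> set \<pi> \<subseteq> V)"

definition ps_size :: "nat list list \<Rightarrow> nat" where
  "ps_size Ps = (\<Sum>\<pi>\<leftarrow>Ps. length \<pi>)"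

text \<open>An ordered b-bridge: nodes vs!0..vs!(b-1), path indices is!0..is!(b-1);
the river is Ps!(is!(b-1)) and it comes after all arcs in the order.\<close>
definition ordered_bridge :: "nat list list \<Rightarrow> nat \<Rightarrow> nat list \<Rightarrow> nat list \<Rightarrow> bool" where
  "ordered_bridge Ps b vs is \<longleftrightarrow>
     length vs = b \<and> length is = b \<and> b \<ge> 1 \<and> distinct vs \<and> distinct is \<and>
     (\<forall>i\<in>set is. i < length Ps) \<and>
     (\<forall>i. i + 1 < b \<longrightarrow> prec (Ps ! (is ! i)) (vs ! i) (vs ! (i + 1))) \<and>
     prec (Ps ! (is ! (b - 1))) (vs ! 0) (vs ! (b - 1)) \<and>
     (\<forall>i. i + 1 < b \<longrightarrow> is ! i < is ! (b - 1))"

definition obg_gt :: "nat list list \<Rightarrow> enat \<Rightarrow> bool" where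
  "obg_gt Ps k \<longleftrightarrow> (\<forall>b vs is. ordered_bridge Ps b vs is \<longrightarrow> k < enat b)"

definition beta_star :: "nat \<Rightarrow> nat \<Rightarrow> enat \<Rightarrow> nat" where
  "beta_star n p k = Max {ps_size Ps | V Ps. path_system V Ps \<and> card V = n \<and> length Ps = p \<and> obg_gt Ps k}"

end

theory Submission
  imports Defs "HOL-Library.Nat_Bijection"
begin

text \<open>A path system has no ordered bridge at all when its nodes are points of the plane,
every path runs along a line in increasing x-order, the paths are sorted by slope and
distinct parallel paths are disjoint. Indeed, let s be the slope of the river and
D = y - s x: along every arc D does not increase, along the first arc (which meets the
river in its first node, hence has smaller slope) it strictly decreases, yet along the
river D is constant.

One path through all nodes plus p - 1 trivial paths gives size n + p - 1. The k m^2
lines y = a x + c (a < m, c < k m) through the grid k \<times> 2 k m give size (k m)^2;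
with k^3 \<approx> n^2/p and m^3 \<approx> p^2/n this is of order (n p)^(2/3), unless
n^2 < 2 p or p^2 < 2 n, where (n p)^(2/3) is already at most 2 (n + p).\<close>

lemma prec_mem: "prec \<pi> x y \<Longrightarrow> x \<in> set \<pi> \<and> y \<in> set \<pi>"
  unfolding prec_def by auto

lemma no_ordered_bridge_if_sorted_slopes:
  fixes X Y s :: "nat \<Rightarrow> 'a::linordered_idom"
  assumes on_line: "\<And>j u w. j < length Ps \<Longrightarrow> prec (Ps ! j) u w \<Longrightarrow>
      X u < X w \<and> Y w - Y u = s j * (X w - X u)"
    and "mono s"
    and parallel_disjoint: "\<And>j j'. j < length Ps \<Longrightarrow> j' < length Ps \<Longrightarrow> j \<noteq> j' \<Longrightarrow>
      s j = s j' \<Longrightarrow> set (Ps ! j) \<inter> set (Ps ! j') = {}"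
  shows "\<not> ordered_bridge Ps b vs is"
proof
  assume "ordered_bridge Ps b vs is"
  then have len: "length is = b" "b \<ge> 1" and "distinct is"
    and idx: "\<And>i. i < b \<Longrightarrow> is ! i < length Ps"
    and arc: "\<And>i. i + 1 < b \<Longrightarrow> prec (Ps ! (is ! i)) (vs ! i) (vs ! (i + 1))"
    and river: "prec (Ps ! (is ! (b - 1))) (vs ! 0) (vs ! (b - 1))"
    and river_last: "\<And>i. i + 1 < b \<Longrightarrow> is ! i < is ! (b - 1)"
    unfolding ordered_bridge_def by auto
  define r where "r = is ! (b - 1)"
  define D where "D v = Y v - s r * X v" for v
  have "r < length Ps" unfolding r_def using idx len by simp
  from on_line[OF this river[folded r_def]]
  have "X (vs ! 0) < X (vs ! (b - 1))" and river_D: "D (vs ! (b - 1)) = D (vs ! 0)"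
    unfolding D_def by (auto simp: algebra_simps)
  then have "b \<ge> 2" using len by (cases "b = 1") auto
  have arc_D: "D (vs ! (i + 1)) - D (vs ! i) = (s (is ! i) - s r) * (X (vs ! (i + 1)) - X (vs ! i))"
    and arc_X: "X (vs ! i) < X (vs ! (i + 1))"
    and arc_s: "s (is ! i) \<le> s r" if "i + 1 < b" for i
    using on_line[OF idx arc[OF that]] that river_last[OF that] monoD[OF \<open>mono s\<close>]
    unfolding D_def r_def by (auto simp: algebra_simps)
  have descending: "D (vs ! Suc i) \<le> D (vs ! i)" if "i \<in> {..<b - 1}" for i
  proof -
    from that have "i + 1 < b" by simp
    then have "(s (is ! i) - s r) * (X (vs ! (i + 1)) - X (vs ! i)) \<le> 0"
      using arc_X arc_s by (intro mult_nonpos_nonneg) (auto simp: less_imp_le)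
    then show ?thesis
      using arc_D[OF \<open>i + 1 < b\<close>] by simp
  qed
  have "is ! 0 \<noteq> r"
    unfolding r_def using \<open>distinct is\<close> len \<open>b \<ge> 2\<close> by (simp add: nth_eq_iff_index_eq)
  moreover have "vs ! 0 \<in> set (Ps ! (is ! 0)) \<inter> set (Ps ! r)"
    using prec_mem[OF arc[of 0]] prec_mem[OF river[folded r_def]] \<open>b \<ge> 2\<close> by auto
  ultimately have "s (is ! 0) \<noteq> s r"
    using parallel_disjoint[of "is ! 0" r] idx[of 0] \<open>r < length Ps\<close> \<open>b \<ge> 2\<close> by auto
  with arc_s[of 0] have "(s (is ! 0) - s r) * (X (vs ! 1) - X (vs ! 0)) < 0"
    using arc_X[of 0] \<open>b \<ge> 2\<close> by (intro mult_neg_pos) auto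
  then have "D (vs ! 1) < D (vs ! 0)"
    using arc_D[of 0] \<open>b \<ge> 2\<close> by simp
  moreover have "D (vs ! (b - 1)) \<le> D (vs ! 1)"
    by (rule lift_Suc_antimono_le_ivl[of "{..<b - 1}"]) (use descending \<open>b \<ge> 2\<close> in auto)
  ultimately show False
    using river_D by simp
qed

lemma obg_gt_infinity_iff: "obg_gt Ps \<infinity> \<longleftrightarrow> (\<forall>b vs is. \<not> ordered_bridge Ps b vs is)"
  by (simp add: obg_gt_def)

lemma ps_size_le_length_mult_card:
  assumes "path_system V Ps"
  shows "ps_size Ps \<le> length Ps * card V"
proof -
  have "length \<pi> \<le> card V" if "\<pi> \<in> set Ps" for \<pi>
    using assms that unfolding path_system_def by (metis card_mono distinct_card)
  then have "ps_size Ps \<le> (\<Sum>\<pi>\<leftarrow>Ps. card V)"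
    unfolding ps_size_def by (rule sum_list_mono)
  then show ?thesis
    by (simp add: sum_list_triv)
qed

lemma ps_size_le_beta_star:
  assumes "path_system V Ps" "card V = n" "length Ps = p" "obg_gt Ps k"
  shows "ps_size Ps \<le> beta_star n p k"
proof -
  let ?S = "{ps_size Ps | V Ps. path_system V Ps \<and> card V = n \<and> length Ps = p \<and> obg_gt Ps k}"
  have "?S \<subseteq> {..p * n}"
    using ps_size_le_length_mult_card by fastforce
  then have "finite ?S"
    by (rule finite_subset) simp
  moreover have "ps_size Ps \<in> ?S"
    using assms by blast
  ultimately show ?thesis
    unfolding beta_star_def by (rule Max_ge)
qed

lemma exists_superset_card:
  fixes A :: "'a set"
  assumes "infinite (UNIV :: 'a set)" "finite A" "card A \<le> n"
  obtains V where "finite V" "A \<subseteq> V" "card V = n"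
proof -
  have "infinite (UNIV - A)"
    using assms(1,2) by (rule Diff_infinite_finite[rotated])
  then obtain B where B: "finite B" "card B = n - card A" "B \<subseteq> UNIV - A"
    using infinite_arbitrarily_large by blast
  then have "card (A \<union> B) = n"
    using assms(2,3) by (subst card_Un_disjoint) auto
  with B assms(2) show ?thesis
    by (intro that[of "A \<union> B"]) auto
qed

lemma ps_size_le_beta_star_infinity:
  assumes "finite A" "card A \<le> n" "\<And>\<pi>. \<pi> \<in> set Ps \<Longrightarrow> distinct \<pi> \<and> set \<pi> \<subseteq> A"
    and "length Ps = p" "\<And>b vs is. \<not> ordered_bridge Ps b vs is"
  shows "ps_size Ps \<le> beta_star n p \<infinity>"
proof -
  obtain V where "finite V" "A \<subseteq> V" "card V = n"
    using exists_superset_card[OF infinite_UNIV_nat assms(1,2)] .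
  with assms(3) have "path_system V Ps"
    unfolding path_system_def by blast
  with assms(4,5) \<open>card V = n\<close> show ?thesis
    by (intro ps_size_le_beta_star) (auto simp: obg_gt_infinity_iff)
qed

lemma beta_star_infinity_ge_linear:
  assumes "n \<ge> 1" "p \<ge> 1"
  shows "n + p - 1 \<le> beta_star n p \<infinity>"
proof -
  define Ps where "Ps = [0..<n] # replicate (p - 1) [0]"
  have only_first: "j = 0 \<and> u < w" if "j < length Ps" "prec (Ps ! j) u w" for j u w
    using that unfolding Ps_def prec_def by (cases j) auto
  \<comment> \<open>Giving every path its own slope makes the disjointness hypothesis vacuous.\<close>
  have "\<And>b vs is. \<not> ordered_bridge Ps b vs is"
    by (rule no_ordered_bridge_if_sorted_slopes[where X = int and Y = "\<lambda>_. 0" and s = int])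
      (use only_first in \<open>auto simp: mono_def\<close>)
  moreover have "\<pi> \<in> set Ps \<Longrightarrow> distinct \<pi> \<and> set \<pi> \<subseteq> {0..<n}" for \<pi>
    using assms unfolding Ps_def by auto
  ultimately have "ps_size Ps \<le> beta_star n p \<infinity>"
    by (intro ps_size_le_beta_star_infinity[of "{0..<n}"]) (use assms in \<open>auto simp: Ps_def\<close>)
  moreover have "ps_size Ps = n + (p - 1)"
    unfolding Ps_def ps_size_def by (simp add: sum_list_replicate)
  ultimately show ?thesis
    using assms by simp
qed

text \<open>Grid points (x, y) are numbered by prod_encode; path j is the line of slope
j div (k m) and intercept j mod (k m), so the paths come sorted by slope.\<close>

definition grid_line :: "nat \<Rightarrow> nat \<Rightarrow> nat \<Rightarrow> nat list" where
  "grid_line k a c = map (\<lambda>x. prod_encode (x, a * x + c)) [0..<k]"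

definition grid_paths :: "nat \<Rightarrow> nat \<Rightarrow> nat \<Rightarrow> nat list list" where
  "grid_paths k m p =
     map (\<lambda>j. if j < k * m * m then grid_line k (j div (k * m)) (j mod (k * m)) else []) [0..<p]"

lemma set_grid_line: "set (grid_line k a c) = (\<lambda>x. prod_encode (x, a * x + c)) ` {..<k}"
  by (auto simp: grid_line_def)

lemma length_grid_line [simp]: "length (grid_line k a c) = k"
  by (simp add: grid_line_def)

lemma distinct_grid_line: "distinct (grid_line k a c)"
  by (simp add: grid_line_def distinct_map inj_on_def)

lemma prec_grid_line:
  assumes "prec (grid_line k a c) u w"
  obtains x x' where "x < x'" "u = prod_encode (x, a * x + c)" "w = prod_encode (x', a * x' + c)"
  using assms unfolding grid_line_def prec_def by auto

lemma grid_paths_no_ordered_bridge: "\<not> ordered_bridge (grid_paths k m p) b vs is"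
proof (rule no_ordered_bridge_if_sorted_slopes[where X = "\<lambda>u. int (fst (prod_decode u))"
      and Y = "\<lambda>u. int (snd (prod_decode u))" and s = "\<lambda>j. int (j div (k * m))"])
  fix j u w
  assume "j < length (grid_paths k m p)" "prec (grid_paths k m p ! j) u w"
  then have "prec (grid_line k (j div (k * m)) (j mod (k * m))) u w"
    by (auto simp: grid_paths_def prec_def split: if_splits)
  then show "int (fst (prod_decode u)) < int (fst (prod_decode w)) \<and>
      int (snd (prod_decode w)) - int (snd (prod_decode u)) =
      int (j div (k * m)) * (int (fst (prod_decode w)) - int (fst (prod_decode u)))"
    by (elim prec_grid_line) (simp add: algebra_simps)
next
  show "mono (\<lambda>j. int (j div (k * m)))"
    by (simp add: mono_def div_le_mono)
next
  fix j j'
  assume j: "j < length (grid_paths k m p)" "j' < length (grid_paths k m p)" "j \<noteq> j'"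
    and slope: "int (j div (k * m)) = int (j' div (k * m))"
  show "set (grid_paths k m p ! j) \<inter> set (grid_paths k m p ! j') = {}"
  proof (rule ccontr)
    assume "set (grid_paths k m p ! j) \<inter> set (grid_paths k m p ! j') \<noteq> {}"
    then obtain x x' where
      "prod_encode (x, j div (k * m) * x + j mod (k * m)) =
       prod_encode (x', j' div (k * m) * x' + j' mod (k * m))"
      using j by (auto simp: grid_paths_def set_grid_line split: if_splits)
    then have "j mod (k * m) = j' mod (k * m)"
      using slope by auto
    with slope have "j = j'"
      by (metis div_mult_mod_eq of_nat_eq_iff)
    with j show False
      by simp
  qed
qed

lemma grid_paths_subset:
  assumes "\<pi> \<in> set (grid_paths k m p)"
  shows "distinct \<pi> \<and> set \<pi> \<subseteq> prod_encode ` ({..<k} \<times> {..<2 * k * m})"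
proof -
  have "a * x + c < 2 * k * m" if "a < m" "c < k * m" "x < k" for a x c
  proof -
    have "a * x < m * k"
      using that by (intro mult_strict_mono) auto
    moreover have "2 * k * m = m * k + k * m"
      by simp
    ultimately show ?thesis
      using that by linarith
  qed
  moreover have "j div (k * m) < m" if "j < k * m * m" for j
    using that by (simp add: less_mult_imp_div_less mult.commute)
  moreover have "j mod (k * m) < k * m" if "j < k * m * m" for j
    using that by (metis mod_less_divisor mult_is_0 not_gr0 not_less0)
  ultimately show ?thesis
    using assms by (auto simp: grid_paths_def set_grid_line distinct_grid_line)
qed

lemma ps_size_grid_paths:
  assumes "k * m * m \<le> p"
  shows "ps_size (grid_paths k m p) = k * m * m * k"
proof -
  have "ps_size (grid_paths k m p) = (\<Sum>j\<in>{0..<p}. if j < k * m * m then k else 0)"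
    unfolding ps_size_def grid_paths_def
    by (simp add: interv_sum_list_conv_sum_set_nat comp_def if_distrib[of length] cong: if_cong)
  also have "\<dots> = (\<Sum>j\<in>{0..<k * m * m}. k)"
    using assms by (intro sum.mono_neutral_cong_right) auto
  finally show ?thesis
    by simp
qed

lemma beta_star_infinity_ge_grid:
  assumes "k * m * m \<le> p" "2 * k * k * m \<le> n"
  shows "(k * m)^2 \<le> beta_star n p \<infinity>"
proof -
  have "card (prod_encode ` ({..<k} \<times> {..<2 * k * m})) \<le> card ({..<k} \<times> {..<2 * k * m})"
    by (rule card_image_le) simp
  also have "\<dots> \<le> n"
    using assms(2) by (simp add: card_cartesian_product mult.assoc mult.left_commute)
  finally have "ps_size (grid_paths k m p) \<le> beta_star n p \<infinity>"
    using grid_paths_subset[of _ k m p] grid_paths_no_ordered_bridge[of k m p]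
    by (intro ps_size_le_beta_star_infinity) (auto simp: grid_paths_def)
  with assms(1) show ?thesis
    by (simp add: ps_size_grid_paths power2_eq_square mult_ac)
qed


lemma exists_cube_bracket:
  fixes a b :: nat
  assumes "0 < a" "a \<le> b"
  obtains k where "1 \<le> k" "a * k^3 \<le> b" "b < 8 * a * k^3"
proof -
  have "y \<le> b" if "a * y^3 \<le> b" for y
  proof -
    have "y \<le> y^3"
      by (cases y) (auto intro: self_le_power)
    also have "\<dots> \<le> a * y^3"
      using assms(1) by simp
    finally show ?thesis
      using that by simp
  qed
  then obtain k where k: "a * k^3 \<le> b" and greatest: "\<And>y. a * y^3 \<le> b \<Longrightarrow> y \<le> k"
    using Nat.ex_has_greatest_nat[of "\<lambda>k. a * k^3 \<le> b" 1 b] assms(2) by auto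
  have "1 \<le> k"
    using greatest[of 1] assms(2) by simp
  have "b < a * (Suc k)^3"
    using greatest[of "Suc k"] by (metis Suc_n_not_le_n not_le)
  also have "\<dots> \<le> a * (2 * k)^3"
    using \<open>1 \<le> k\<close> by (intro mult_le_mono2 power_mono) auto
  finally show ?thesis
    using that \<open>1 \<le> k\<close> k by (simp add: power_mult_distrib)
qed

lemma grid_side_bound:
  fixes n p k m :: nat
  assumes "2 * p * k^3 \<le> n^2" "2 * n * m^3 \<le> p^2" "0 < n" "0 < p"
  shows "2 * k * k * m \<le> n"
proof (rule power_le_imp_le_base[where n = 2])
  have "(2 * k * k * m)^3 * (n * p^2) = (2 * p * k^3)^2 * (2 * n * m^3)"
    by (simp add: algebra_simps power2_eq_square power3_eq_cube)
  also have "\<dots> \<le> (n^2)^2 * p^2"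
    using assms(1,2) by (intro mult_le_mono power_mono) auto
  also have "\<dots> = n^3 * (n * p^2)"
    by (simp add: algebra_simps power2_eq_square power3_eq_cube)
  finally show "(2 * k * k * m) ^ Suc 2 \<le> n ^ Suc 2"
    using assms(3,4) by (simp add: numeral_3_eq_3[symmetric])
qed simp

lemma grid_parameters:
  fixes n p :: nat
  assumes "0 < n" "0 < p" "2 * p \<le> n^2" "2 * n \<le> p^2"
  obtains k m where "k * m * m \<le> p" "2 * k * k * m \<le> n" "n * p < 256 * (k * m)^3"
proof -
  obtain k where k: "1 \<le> k" "2 * p * k^3 \<le> n^2" "n^2 < 16 * p * k^3"
    using exists_cube_bracket[of "2 * p" "n^2"] assms by auto
  obtain m where m: "1 \<le> m" "2 * n * m^3 \<le> p^2" "p^2 < 16 * n * m^3"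
    using exists_cube_bracket[of "2 * n" "p^2"] assms by auto
  have "k * m * m \<le> p"
    using grid_side_bound[OF m(2) k(2) assms(2,1)] by (simp add: mult_ac)
  moreover have "2 * k * k * m \<le> n"
    using grid_side_bound[OF k(2) m(2) assms(1,2)] .
  moreover have "(n * p) * (n * p) < (n * p) * (256 * (k * m)^3)"
  proof -
    have "(n * p) * (n * p) = n^2 * p^2"
      by (simp add: power2_eq_square)
    also have "\<dots> < (16 * p * k^3) * (16 * n * m^3)"
      using k m assms(2) by (intro mult_strict_mono) auto
    also have "\<dots> = (n * p) * (256 * (k * m)^3)"
      by (simp add: algebra_simps)
    finally show ?thesis .
  qed
  ultimately show ?thesis
    by (intro that) auto
qed

lemma two_thirds_power_le:
  fixes n p M :: nat
  assumes "(n * p)^2 \<le> M^3"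
  shows "real n powr (2/3) * real p powr (2/3) \<le> real M"
proof (rule power_le_imp_le_base[where n = 2])
  have "(real (n * p) powr (2/3))^3 = real ((n * p)^2)"
  proof (cases "n * p = 0")
    case False
    then have "(real (n * p) powr (2/3))^3 = real (n * p) powr 2"
      by (simp add: powr_power)
    then show ?thesis
      by simp
  qed auto
  then have "(real n powr (2/3) * real p powr (2/3))^3 = real ((n * p)^2)"
    by (simp add: powr_mult)
  also have "\<dots> \<le> real M ^ 3"
    using assms by (simp only: of_nat_le_iff of_nat_power[symmetric])
  finally show "(real n powr (2/3) * real p powr (2/3)) ^ Suc 2 \<le> real M ^ Suc 2"
    by (simp add: numeral_3_eq_3[symmetric])
qed simp


lemma square_mult_le_cube:
  fixes n p :: nat
  assumes "n^2 \<le> 2 * p"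
  shows "(n * p)^2 \<le> (2 * p)^3"
proof -
  have "(n * p)^2 = n^2 * p^2"
    by (simp add: power_mult_distrib)
  also have "\<dots> \<le> (2 * p) * p^2"
    using assms by simp
  also have "\<dots> \<le> (2 * p)^3"
    by (simp add: power2_eq_square power3_eq_cube)
  finally show ?thesis .
qed

lemma two_thirds_power_le_beta_star:
  assumes "1 \<le> n" "1 \<le> p"
  shows "real n powr (2/3) * real p powr (2/3) \<le> 64 * real (beta_star n p \<infinity>)"
proof -
  have linear: "n + p - 1 \<le> beta_star n p \<infinity>"
    using beta_star_infinity_ge_linear[OF assms] .
  consider "2 * p \<le> n^2" "2 * n \<le> p^2" | "n^2 < 2 * p" | "p^2 < 2 * n"
    by linarith
  then show ?thesis
  proof cases
    case 1
    then obtain k m where km: "k * m * m \<le> p" "2 * k * k * m \<le> n" "n * p < 256 * (k * m)^3"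
      using grid_parameters[of n p] assms by auto
    have "(n * p)^2 \<le> (256 * (k * m)^3)^2"
      using km(3) by (intro power_mono) auto
    also have "\<dots> \<le> (64 * (k * m)^2)^3"
      by (simp add: power_mult_distrib flip: power_mult)
    finally have "real n powr (2/3) * real p powr (2/3) \<le> real (64 * (k * m)^2)"
      by (rule two_thirds_power_le)
    also have "\<dots> \<le> real (64 * beta_star n p \<infinity>)"
      using beta_star_infinity_ge_grid[OF km(1,2)] by (simp only: of_nat_le_iff)
    finally show ?thesis
      by simp
  next
    case 2
    then have "real n powr (2/3) * real p powr (2/3) \<le> real (2 * p)"
      by (intro two_thirds_power_le square_mult_le_cube) simp
    with linear assms show ?thesis
      by simp
  next
    case 3
    then have "(n * p)^2 \<le> (2 * n)^3"
      using square_mult_le_cube[of p n] by (simp add: mult.commute)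
    then have "real n powr (2/3) * real p powr (2/3) \<le> real (2 * n)"
      by (rule two_thirds_power_le)
    with linear assms show ?thesis
      by simp
  qed
qed

theorem theorem3p19:
  shows "\<exists>c>0. \<forall>n p::nat. n \<ge> 1 \<longrightarrow> p \<ge> 1 \<longrightarrow>
           real (beta_star n p \<infinity>) \<ge> c * (real n powr (2/3) * real p powr (2/3) + real n + real p)"
proof (intro exI[of _ "1/66"] conjI allI impI)
  fix n p :: nat
  assume "n \<ge> 1" "p \<ge> 1"
  then have "n + p \<le> 2 * beta_star n p \<infinity>"
    using beta_star_infinity_ge_linear[of n p] by linarith
  then have "real n + real p \<le> 2 * real (beta_star n p \<infinity>)"
    by linarith
  with two_thirds_power_le_beta_star[OF \<open>n \<ge> 1\<close> \<open>p \<ge> 1\<close>]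
  have "real n powr (2/3) * real p powr (2/3) + real n + real p \<le> 66 * real (beta_star n p \<infinity>)"
    by linarith
  then show "real (beta_star n p \<infinity>) \<ge> 1/66 * (real n powr (2/3) * real p powr (2/3) + real n + real p)"
    by simp
qed simp

end
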